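(* Let $\mathbf{Z}(\mathbf{s},t)=\{Z_1(\mathbf{s},t),\ldots,Z_p(\mathbf{s},t)\}^\top$ be a $p$-variate strictly stationary spatio-temporal random field with cross-covariance functions $C_{ij}(\mathbf{h},u)=\operatorname{cov}\{Z_i(\mathbf{s}+\mathbf{h},t+u),Z_j(\mathbf{s},t)\}$. If any two of the properties V$\mid$ST, S$\mid$VT, T$\mid$VS hold, then the remaining one also holds and the covariance is fully separable.
   Context: Separability types (each required for all $i,j\in\{1,\ldots,p\}$ and all space lags $\mathbf{h}$ and time lags $u$): V$\mid$ST: $C_{ij}(\mathbf{h},u)=\rho_1(\mathbf{h},u)C_{ij}(\mathbf{0},0)$ for some function $\rho_1$ with $\rho_1(\mathbf{0},0)=1$. S$\mid$VT: $C_{ij}(\mathbf{h},u)=\rho_2(\mathbf{h})C_{ij}(\mathbf{0},u)$ for some $\rho_2$ with $\rho_2(\mathbf{0})=1$. T$\mid$VS: $C_{ij}(\mathbf{h},u)=\rho_3(u)C_{ij}(\mathbf{h},0)$ for some $\rho_3$ with $\rho_3(0)=1$. V$\mid$S: $C_{ij}(\mathbf{h},u)=\rho_4(\mathbf{h},u)C_{ij}(\mathbf{0},u)$ for some $\rho_4$ with $\rho_4(\mathbf{0},u)=1$ for all $u$. V$\mid$T: $C_{ij}(\mathbf{h},u)=\rho_5(\mathbf{h},u)C_{ij}(\mathbf{h},0)$ for some $\rho_5$ with $\rho_5(\mathbf{h},0)=1$ for all $\mathbf{h}$. S$\mid$T: $C_{ij}(\mathbf{h},u)=\rho_{6,ij}(\mathbf{h})C_{ij}(\mathbf{0},u)$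 for some functions $\rho_{6,ij}$ with $\rho_{6,ij}(\mathbf{0})=1$. The covariance is fully separable if it satisfies all six of these separability properties. *)

theory Defs
  imports "HOL-Probability.Probability"
begin

definition random_field ::
  "'w measure \<Rightarrow> nat \<Rightarrow> (nat \<Rightarrow> 'd::euclidean_space \<Rightarrow> real \<Rightarrow> 'w \<Rightarrow> real) \<Rightarrow> bool" where
  "random_field M p Z \<longleftrightarrow> (\<forall>i\<in>{1..p}. \<forall>s t. Z i s t \<in> borel_measurable M)"

definition finite_second_moments ::
  "'w measure \<Rightarrow> nat \<Rightarrow> (nat \<Rightarrow> 'd::euclidean_space \<Rightarrow> real \<Rightarrow> 'w \<Rightarrow> real) \<Rightarrow> bool" where
  "finite_second_moments M p Z \<longleftrightarrow>
     (\<forall>i\<in>{1..p}. \<forall>s t. integrable M (\<lambda>\<omega>. (Z i s t \<omega>)\<^sup>2))"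

definition strictly_stationary ::
  "'w measure \<Rightarrow> nat \<Rightarrow> (nat \<Rightarrow> 'd::euclidean_space \<Rightarrow> real \<Rightarrow> 'w \<Rightarrow> real) \<Rightarrow> bool" where
  "strictly_stationary M p Z \<longleftrightarrow>
     (\<forall>(n::nat) (idx::nat \<Rightarrow> nat) (s::nat \<Rightarrow> 'd) (t::nat \<Rightarrow> real) (h::'d) (u::real).
        (\<forall>k<n. idx k \<in> {1..p}) \<longrightarrow>
        distr M (Pi\<^sub>M {..<n} (\<lambda>_. borel)) (\<lambda>\<omega>. \<lambda>k\<in>{..<n}. Z (idx k) (s k + h) (t k + u) \<omega>)
        = distr M (Pi\<^sub>M {..<n} (\<lambda>_. borel)) (\<lambda>\<omega>. \<lambda>k\<in>{..<n}. Z (idx k) (s k) (t k) \<omega>))"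

definition covariance :: "'w measure \<Rightarrow> ('w \<Rightarrow> real) \<Rightarrow> ('w \<Rightarrow> real) \<Rightarrow> real" where
  "covariance M X Y =
     (\<integral>\<omega>. (X \<omega> - (\<integral>\<omega>'. X \<omega>' \<partial>M)) * (Y \<omega> - (\<integral>\<omega>'. Y \<omega>' \<partial>M)) \<partial>M)"

text \<open>Cross-covariance C_ij(h,u) = cov(Z_i(s+h,t+u), Z_j(s,t)); under stationarity it
  does not depend on (s,t), so we evaluate it at s = 0, t = 0.\<close>
definition cross_cov ::
  "'w measure \<Rightarrow> (nat \<Rightarrow> 'd::euclidean_space \<Rightarrow> real \<Rightarrow> 'w \<Rightarrow> real) \<Rightarrow> nat \<Rightarrow> nat \<Rightarrow> 'd \<Rightarrow> real \<Rightarrow> real" where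
  "cross_cov M Z i j h u = covariance M (Z i h u) (Z j 0 0)"

type_synonym 'd cov_fun = "nat \<Rightarrow> nat \<Rightarrow> 'd \<Rightarrow> real \<Rightarrow> real"

definition sep_V_ST :: "nat \<Rightarrow> ('d::euclidean_space) cov_fun \<Rightarrow> bool" where
  "sep_V_ST p C \<longleftrightarrow> (\<exists>\<rho>1 :: 'd \<Rightarrow> real \<Rightarrow> real. \<rho>1 0 0 = 1 \<and>
     (\<forall>i\<in>{1..p}. \<forall>j\<in>{1..p}. \<forall>h u. C i j h u = \<rho>1 h u * C i j 0 0))"

definition sep_S_VT :: "nat \<Rightarrow> ('d::euclidean_space) cov_fun \<Rightarrow> bool" where
  "sep_S_VT p C \<longleftrightarrow> (\<exists>\<rho>2 :: 'd \<Rightarrow> real. \<rho>2 0 = 1 \<and>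
     (\<forall>i\<in>{1..p}. \<forall>j\<in>{1..p}. \<forall>h u. C i j h u = \<rho>2 h * C i j 0 u))"

definition sep_T_VS :: "nat \<Rightarrow> ('d::euclidean_space) cov_fun \<Rightarrow> bool" where
  "sep_T_VS p C \<longleftrightarrow> (\<exists>\<rho>3 :: real \<Rightarrow> real. \<rho>3 0 = 1 \<and>
     (\<forall>i\<in>{1..p}. \<forall>j\<in>{1..p}. \<forall>h u. C i j h u = \<rho>3 u * C i j h 0))"

definition sep_V_S :: "nat \<Rightarrow> ('d::euclidean_space) cov_fun \<Rightarrow> bool" where
  "sep_V_S p C \<longleftrightarrow> (\<exists>\<rho>4 :: 'd \<Rightarrow> real \<Rightarrow> real. (\<forall>u. \<rho>4 0 u = 1) \<and>
     (\<forall>i\<in>{1..p}. \<forall>j\<in>{1..p}. \<forall>h u. C i j h u = \<rho>4 h u * C i j 0 u))"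

definition sep_V_T :: "nat \<Rightarrow> ('d::euclidean_space) cov_fun \<Rightarrow> bool" where
  "sep_V_T p C \<longleftrightarrow> (\<exists>\<rho>5 :: 'd \<Rightarrow> real \<Rightarrow> real. (\<forall>h. \<rho>5 h 0 = 1) \<and>
     (\<forall>i\<in>{1..p}. \<forall>j\<in>{1..p}. \<forall>h u. C i j h u = \<rho>5 h u * C i j h 0))"

definition sep_S_T :: "nat \<Rightarrow> ('d::euclidean_space) cov_fun \<Rightarrow> bool" where
  "sep_S_T p C \<longleftrightarrow> (\<exists>\<rho>6 :: nat \<Rightarrow> nat \<Rightarrow> 'd \<Rightarrow> real.
     (\<forall>i\<in>{1..p}. \<forall>j\<in>{1..p}. \<rho>6 i j 0 = 1 \<and> (\<forall>h u. C i j h u = \<rho>6 i j h * C i j 0 u)))"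

definition fully_separable :: "nat \<Rightarrow> ('d::euclidean_space) cov_fun \<Rightarrow> bool" where
  "fully_separable p C \<longleftrightarrow> sep_V_ST p C \<and> sep_S_VT p C \<and> sep_T_VS p C \<and>
     sep_V_S p C \<and> sep_V_T p C \<and> sep_S_T p C"

end

theory Submission
  imports Defs
begin

text \<open>The proposition is pure algebra on the cross-covariance. Given two of them, evaluating one factorization at h = 0 or u = 0 and
  substituting into the other factors out the remaining argument as well; for instance,
  V|ST and S|VT give C(h,u) = \<rho>2(h) \<rho>1(0,u) C(0,0) = \<rho>1(0,u) C(h,0), which is T|VS.
  S|VT together with T|VS gives C(h,u) = \<rho>2(h) \<rho>3(u) C(0,0), and the weaker
  properties V|S, V|T and S|T are instances of S|VT or T|VS.\<close>

lemma sep_T_VS_if_sep_V_ST_sep_S_VT: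
  fixes C :: "('d::euclidean_space) cov_fun"
  assumes "sep_V_ST p C" and "sep_S_VT p C"
  shows "sep_T_VS p C"
proof -
  obtain \<rho>1 where \<rho>1: "\<rho>1 0 0 = 1"
    and C1: "\<And>i j h u. i \<in> {1..p} \<Longrightarrow> j \<in> {1..p} \<Longrightarrow> C i j h u = \<rho>1 h u * C i j 0 0"
    using assms(1) unfolding sep_V_ST_def by blast
  obtain \<rho>2 where C2: "\<And>i j h u. i \<in> {1..p} \<Longrightarrow> j \<in> {1..p} \<Longrightarrow> C i j h u = \<rho>2 h * C i j 0 u"
    using assms(2) unfolding sep_S_VT_def by blast
  have factor: "C i j h u = \<rho>1 0 u * C i j h 0" if "i \<in> {1..p}" "j \<in> {1..p}" for i j h u
  proof -
    have "C i j h u = \<rho>2 h * (\<rho>1 0 u * C i j 0 0)"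
      using C1[OF that, of 0 u] C2[OF that, of h u] by simp
    also have "\<dots> = \<rho>1 0 u * C i j h 0"
      using C2[OF that, of h 0] by simp
    finally show ?thesis .
  qed
  show ?thesis
    unfolding sep_T_VS_def
    by (intro exI[of _ "\<lambda>u. \<rho>1 0 u"] conjI ballI allI)
      (use \<rho>1 factor in blast)+
qed

lemma sep_S_VT_if_sep_V_ST_sep_T_VS:
  fixes C :: "('d::euclidean_space) cov_fun"
  assumes "sep_V_ST p C" and "sep_T_VS p C"
  shows "sep_S_VT p C"
proof -
  obtain \<rho>1 where \<rho>1: "\<rho>1 0 0 = 1"
    and C1: "\<And>i j h u. i \<in> {1..p} \<Longrightarrow> j \<in> {1..p} \<Longrightarrow> C i j h u = \<rho>1 h u * C i j 0 0"
    using assms(1) unfolding sep_V_ST_def by blast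
  obtain \<rho>3 where C3: "\<And>i j h u. i \<in> {1..p} \<Longrightarrow> j \<in> {1..p} \<Longrightarrow> C i j h u = \<rho>3 u * C i j h 0"
    using assms(2) unfolding sep_T_VS_def by blast
  have factor: "C i j h u = \<rho>1 h 0 * C i j 0 u" if "i \<in> {1..p}" "j \<in> {1..p}" for i j h u
  proof -
    have "C i j h u = \<rho>3 u * (\<rho>1 h 0 * C i j 0 0)"
      using C1[OF that, of h 0] C3[OF that, of h u] by simp
    also have "\<dots> = \<rho>1 h 0 * C i j 0 u"
      using C3[OF that, of 0 u] by simp
    finally show ?thesis .
  qed
  show ?thesis
    unfolding sep_S_VT_def
    by (intro exI[of _ "\<lambda>h. \<rho>1 h 0"] conjI ballI allI)
      (use \<rho>1 factor in blast)+
qed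

lemma sep_V_ST_if_sep_S_VT_sep_T_VS:
  fixes C :: "('d::euclidean_space) cov_fun"
  assumes "sep_S_VT p C" and "sep_T_VS p C"
  shows "sep_V_ST p C"
proof -
  obtain \<rho>2 where \<rho>2: "\<rho>2 0 = 1"
    and C2: "\<And>i j h u. i \<in> {1..p} \<Longrightarrow> j \<in> {1..p} \<Longrightarrow> C i j h u = \<rho>2 h * C i j 0 u"
    using assms(1) unfolding sep_S_VT_def by blast
  obtain \<rho>3 where \<rho>3: "\<rho>3 0 = 1"
    and C3: "\<And>i j h u. i \<in> {1..p} \<Longrightarrow> j \<in> {1..p} \<Longrightarrow> C i j h u = \<rho>3 u * C i j h 0"
    using assms(2) unfolding sep_T_VS_def by blast
  have factor: "C i j h u = \<rho>2 h * \<rho>3 u * C i j 0 0" if "i \<in> {1..p}" "j \<in> {1..p}" for i j h u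
    using C2[OF that, of h u] C3[OF that, of 0 u] by simp
  show ?thesis
    unfolding sep_V_ST_def
  proof (intro exI[of _ "\<lambda>h u. \<rho>2 h * \<rho>3 u"] conjI)
    show "\<rho>2 0 * \<rho>3 0 = 1"
      using \<rho>2 \<rho>3 by simp
  qed (use factor in blast)
qed

lemma sep_V_S_if_sep_S_VT:
  fixes C :: "('d::euclidean_space) cov_fun"
  assumes "sep_S_VT p C"
  shows "sep_V_S p C"
proof -
  obtain \<rho>2 where "\<rho>2 0 = 1" "\<forall>i\<in>{1..p}. \<forall>j\<in>{1..p}. \<forall>h u. C i j h u = \<rho>2 h * C i j 0 u"
    using assms unfolding sep_S_VT_def by blast
  then show ?thesis
    unfolding sep_V_S_def by (intro exI[of _ "\<lambda>h u. \<rho>2 h"]) blast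
qed

lemma sep_V_T_if_sep_T_VS:
  fixes C :: "('d::euclidean_space) cov_fun"
  assumes "sep_T_VS p C"
  shows "sep_V_T p C"
proof -
  obtain \<rho>3 where "\<rho>3 0 = 1" "\<forall>i\<in>{1..p}. \<forall>j\<in>{1..p}. \<forall>h u. C i j h u = \<rho>3 u * C i j h 0"
    using assms unfolding sep_T_VS_def by blast
  then show ?thesis
    unfolding sep_V_T_def by (intro exI[of _ "\<lambda>h u. \<rho>3 u"]) blast
qed

lemma sep_S_T_if_sep_S_VT:
  fixes C :: "('d::euclidean_space) cov_fun"
  assumes "sep_S_VT p C"
  shows "sep_S_T p C"
proof -
  obtain \<rho>2 where "\<rho>2 0 = 1" "\<forall>i\<in>{1..p}. \<forall>j\<in>{1..p}. \<forall>h u. C i j h u = \<rho>2 h * C i j 0 u"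
    using assms unfolding sep_S_VT_def by blast
  then show ?thesis
    unfolding sep_S_T_def by (intro exI[of _ "\<lambda>i j. \<rho>2"]) blast
qed

lemma fully_separable_if_sep_S_VT_sep_T_VS:
  fixes C :: "('d::euclidean_space) cov_fun"
  assumes "sep_S_VT p C" and "sep_T_VS p C"
  shows "fully_separable p C"
  unfolding fully_separable_def
  using assms sep_V_ST_if_sep_S_VT_sep_T_VS sep_V_S_if_sep_S_VT sep_V_T_if_sep_T_VS
    sep_S_T_if_sep_S_VT
  by blast

theorem proposition4:
  fixes M :: "'w measure" and p :: nat
    and Z :: "nat \<Rightarrow> 'd::euclidean_space \<Rightarrow> real \<Rightarrow> 'w \<Rightarrow> real"
  assumes "prob_space M"
    and "p \<ge> 1"
    and "random_field M p Z"
    and "finite_second_moments M p Z"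
    and "strictly_stationary M p Z"
    and "(sep_V_ST p (cross_cov M Z) \<and> sep_S_VT p (cross_cov M Z))
       \<or> (sep_V_ST p (cross_cov M Z) \<and> sep_T_VS p (cross_cov M Z))
       \<or> (sep_S_VT p (cross_cov M Z) \<and> sep_T_VS p (cross_cov M Z))"
  shows "sep_V_ST p (cross_cov M Z) \<and> sep_S_VT p (cross_cov M Z) \<and> sep_T_VS p (cross_cov M Z)
       \<and> fully_separable p (cross_cov M Z)"
proof -
  have "sep_S_VT p (cross_cov M Z) \<and> sep_T_VS p (cross_cov M Z)"
    using assms(6) sep_T_VS_if_sep_V_ST_sep_S_VT sep_S_VT_if_sep_V_ST_sep_T_VS by blast
  then show ?thesis
    using sep_V_ST_if_sep_S_VT_sep_T_VS fully_separable_if_sep_S_VT_sep_T_VS by blast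
qed

end
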